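(* Let $K\subset\mathbb R^n$ be a bounded convex set with nonempty interior such that $0\in K$. Then $$\ell(K)\,L(K^\circ)\ge\frac1{2n}\qquad\text{and}\qquad \ell(K^\circ)\,L(K)\ge\frac1{2n}.$$
   Context: $K^\circ=\{z\in\mathbb R^n: z\cdot x\le1\ \forall x\in K\}$ is the polar body. For a set $E$, $\ell(E)$ is the radius of the largest ball contained in $E$ (inner radius) and $L(E)$ the radius of the smallest ball containing $E$ (outer radius), with $L(E)=\infty$ if $E$ is unbounded. *)

theory Defs
  imports "HOL-Analysis.Analysis"
begin

definition polar :: "'a::euclidean_space set \<Rightarrow> 'a set" where
  "polar K = {z. \<forall>x\<in>K. inner z x \<le> 1}"

definition inner_radius :: "'a::euclidean_space set \<Rightarrow> ereal" where
  "inner_radius E = Sup {ereal r | r x. 0 \<le> r \<and> cball x r \<subseteq> E}"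

text \<open>Outer radius: infimum of radii of balls containing E; equals \<infinity> (Inf of the
  empty set) when E is unbounded.\<close>
definition outer_radius :: "'a::euclidean_space set \<Rightarrow> ereal" where
  "outer_radius E = Inf {ereal r | r x. 0 \<le> r \<and> E \<subseteq> cball x r}"

end

theory Submission
  imports Defs
begin

text \<open>In fact the product is at least \<open>1/2\<close>, independently of the dimension. If
  \<open>polar K \<subseteq> cball y R\<close>, then \<open>polar K \<subseteq> cball 0 (2 * R)\<close> because \<open>0 \<in> polar K\<close>;
  separating a point \<open>z \<notin> closure K\<close> from \<open>K\<close> by a hyperplane yields some \<open>w \<in> polar K\<close>
  with \<open>w \<bullet> z > 1\<close>, so \<open>K\<close> contains the open ball of radius \<open>1 / (2 * R)\<close> around \<open>0\<close>.
  Symmetrically, \<open>K \<subseteq> cball y R\<close> and \<open>0 \<in> K\<close> give \<open>cball 0 (1 / (2 * R)) \<subseteq> polar K\<close> by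
  Cauchy-Schwarz. Taking the infimum over all covering balls gives both inequalities.\<close>

lemma inner_radius_ge:
  assumes "cball x r \<subseteq> E" "0 \<le> r"
  shows "ereal r \<le> inner_radius E"
  unfolding inner_radius_def using assms by (intro Sup_upper) blast

lemma inner_radius_ge_ball:
  assumes "ball x r \<subseteq> E" "0 < r"
  shows "ereal r \<le> inner_radius E"
proof (rule dense_le)
  fix y assume y: "y < ereal r"
  show "y \<le> inner_radius E"
  proof (cases y)
    case (real t)
    have "cball x (max t 0) \<subseteq> ball x r"
      using y real assms(2) by (auto simp: subset_eq)
    then have "ereal (max t 0) \<le> inner_radius E"
      using assms(1) by (intro inner_radius_ge) auto
    then show ?thesis using real by (simp add: order_trans[rotated])
  qed (use y in auto)
qed

lemma cball_subset_cball_radius_le: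
  fixes x :: "'a::euclidean_space"
  assumes "cball x r \<subseteq> cball y R" "0 \<le> R"
  shows "r \<le> R"
proof -
  have "dist x y + r \<le> R \<or> r < 0"
    using assms(1) by (simp add: cball_subset_cball_iff)
  then show ?thesis using assms(2) zero_le_dist[of x y] by linarith
qed

lemma outer_radius_ge:
  fixes x :: "'a::euclidean_space"
  assumes "cball x r \<subseteq> E"
  shows "ereal r \<le> outer_radius E"
  unfolding outer_radius_def
proof (rule Inf_greatest, safe)
  fix R y assume "0 \<le> R" "E \<subseteq> cball y R"
  then have "cball x r \<subseteq> cball y R" using assms by blast
  then show "ereal r \<le> ereal R"
    using \<open>0 \<le> R\<close> by (simp add: cball_subset_cball_radius_le)
qed

lemma subset_cball_zero_double:
  fixes E :: "'a::real_normed_vector set"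
  assumes "0 \<in> E" "E \<subseteq> cball y R"
  shows "E \<subseteq> cball 0 (2 * R)"
proof
  fix w assume "w \<in> E"
  then have "dist y w \<le> R" "dist y 0 \<le> R" using assms by auto
  then show "w \<in> cball 0 (2 * R)"
    using dist_triangle[of 0 w y] by (simp add: dist_commute)
qed

lemma zero_in_polar: "0 \<in> polar K"
  unfolding polar_def by simp

lemma cball_subset_polar:
  fixes K :: "'a::euclidean_space set"
  assumes "K \<subseteq> cball 0 R" "0 < R"
  shows "cball 0 (1 / R) \<subseteq> polar K"
  unfolding polar_def
proof (safe)
  fix z :: 'a and x assume z: "z \<in> cball 0 (1 / R)" and "x \<in> K"
  then have "norm x \<le> R" "norm z \<le> 1 / R" using assms(1) by auto
  then have "norm z * norm x \<le> 1 / R * R"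
    using assms(2) by (intro mult_mono) auto
  then show "inner z x \<le> 1"
    using assms(2) Cauchy_Schwarz_ineq2[of z x] by simp
qed

lemma polar_separates_point:
  fixes K :: "'a::euclidean_space set"
  assumes "convex K" "0 \<in> K" "z \<notin> closure K"
  obtains w where "w \<in> polar K" "inner w z > 1"
proof -
  obtain a b where ab: "inner a z < b" "\<forall>x\<in>closure K. b < inner a x"
    using separating_hyperplane_closed_point
      [OF convex_closure[OF assms(1)] closed_closure assms(3)] by blast
  have "b < 0" using ab(2) assms(2) closure_subset by fastforce
  have "a /\<^sub>R b \<in> polar K"
    unfolding polar_def using ab(2) closure_subset \<open>b < 0\<close>
    by (force simp: divide_simps)
  moreover have "inner (a /\<^sub>R b) z > 1"
    using ab(1) \<open>b < 0\<close> by (simp add: divide_simps)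
  ultimately show thesis by (rule that)
qed

lemma ball_subset_of_polar_subset:
  fixes K :: "'a::euclidean_space set"
  assumes "convex K" "0 \<in> K" "polar K \<subseteq> cball 0 R" "0 < R"
  shows "ball 0 (1 / R) \<subseteq> K"
proof -
  have "cball 0 (1 / R) \<subseteq> closure K"
  proof (rule subsetI, rule ccontr)
    fix z assume z: "z \<in> cball 0 (1 / R)" "z \<notin> closure K"
    obtain w where w: "w \<in> polar K" "inner w z > 1"
      using polar_separates_point[OF assms(1,2) z(2)] .
    have "inner w z \<le> norm w * norm z" by (rule norm_cauchy_schwarz)
    also have "\<dots> \<le> R * (1 / R)"
      using w(1) z(1) assms(3,4) by (intro mult_mono) auto
    finally show False using w(2) assms(4) by simp
  qed
  then have "ball 0 (1 / R) \<subseteq> interior (closure K)"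
    by (meson interior_maximal ball_subset_cball open_ball order_trans)
  then show ?thesis
    using convex_interior_closure[OF assms(1)] interior_subset by blast
qed

text \<open>The ball \<open>cball x c\<close> keeps the covering radii of \<open>E\<close> away from \<open>0\<close>, which is what
  makes the product with an infinite inner radius harmless.\<close>

lemma inner_radius_times_outer_radius_ge:
  fixes E F :: "'a::euclidean_space set"
  assumes "0 < inner_radius F" "cball x c \<subseteq> E" "0 < c" "0 < \<kappa>"
    and cover: "\<And>R y. 0 < R \<Longrightarrow> E \<subseteq> cball y R \<Longrightarrow> ereal (\<kappa> / R) \<le> inner_radius F"
  shows "ereal \<kappa> \<le> inner_radius F * outer_radius E"
proof -
  have "0 < ereal c" using assms(3) by simp
  then have outer_pos: "0 < outer_radius E"
    using outer_radius_ge[OF assms(2)] by (rule order_less_le_trans)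
  show ?thesis
  proof (cases "inner_radius F")
    case (real \<alpha>)
    then have "0 < \<alpha>" using assms(1) by simp
    have "ereal (\<kappa> / \<alpha>) \<le> outer_radius E"
      unfolding outer_radius_def
    proof (rule Inf_greatest, safe)
      fix R y assume "0 \<le> R" "E \<subseteq> cball y R"
      then have "cball x c \<subseteq> cball y R" using assms(2) by blast
      then have "c \<le> R" using \<open>0 \<le> R\<close> by (rule cball_subset_cball_radius_le)
      then have "\<kappa> / R \<le> \<alpha>"
        using cover[of R y] \<open>E \<subseteq> cball y R\<close> assms(3) real by simp
      then show "ereal (\<kappa> / \<alpha>) \<le> ereal R"
        using \<open>0 < \<alpha>\<close> \<open>c \<le> R\<close> assms(3) by (simp add: field_simps)
    qed
    then have "ereal \<alpha> * ereal (\<kappa> / \<alpha>) \<le> ereal \<alpha> * outer_radius E"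
      using \<open>0 < \<alpha>\<close> by (intro ereal_mult_left_mono) auto
    then show ?thesis using real \<open>0 < \<alpha>\<close> by simp
  qed (use assms(1) outer_pos in auto)
qed

theorem mainTheorem11:
  fixes K :: "'a::euclidean_space set"
  assumes "bounded K" and "convex K" and "interior K \<noteq> {}" and "0 \<in> K"
  shows "inner_radius K * outer_radius (polar K) \<ge> ereal (1 / (2 * real DIM('a))) \<and>
         inner_radius (polar K) * outer_radius K \<ge> ereal (1 / (2 * real DIM('a)))"
proof -
  obtain x e where "0 < e" "cball x e \<subseteq> K"
    using assms(3) by (auto simp: mem_interior_cball)
  obtain B where "0 < B" "K \<subseteq> cball 0 B"
    using bounded_subset_ballD[OF assms(1), of 0] ball_subset_cball by blast
  have polar_ball: "cball 0 (1 / B) \<subseteq> polar K"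
    using cball_subset_polar[OF \<open>K \<subseteq> cball 0 B\<close> \<open>0 < B\<close>] .
  have "ereal (1 / 2) \<le> inner_radius K * outer_radius (polar K)"
  proof (rule inner_radius_times_outer_radius_ge[OF _ polar_ball])
    have "0 < ereal e" using \<open>0 < e\<close> by simp
    also have "\<dots> \<le> inner_radius K"
      using inner_radius_ge[OF \<open>cball x e \<subseteq> K\<close>] \<open>0 < e\<close> by simp
    finally show "0 < inner_radius K" .
    fix R y assume "0 < R" "polar K \<subseteq> cball y R"
    have "polar K \<subseteq> cball 0 (2 * R)"
      using \<open>polar K \<subseteq> cball y R\<close> by (rule subset_cball_zero_double[OF zero_in_polar])
    then have "ball 0 (1 / (2 * R)) \<subseteq> K"
      using \<open>0 < R\<close> ball_subset_of_polar_subset[OF assms(2,4)] by simp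
    then have "ereal (1 / (2 * R)) \<le> inner_radius K"
      using \<open>0 < R\<close> by (intro inner_radius_ge_ball) auto
    then show "ereal (1 / 2 / R) \<le> inner_radius K" by simp
  qed (use \<open>0 < B\<close> in auto)
  moreover have "ereal (1 / 2) \<le> inner_radius (polar K) * outer_radius K"
  proof (rule inner_radius_times_outer_radius_ge[OF _ \<open>cball x e \<subseteq> K\<close> \<open>0 < e\<close>])
    have "0 < ereal (1 / B)" using \<open>0 < B\<close> by simp
    also have "\<dots> \<le> inner_radius (polar K)"
      using inner_radius_ge[OF polar_ball] \<open>0 < B\<close> by simp
    finally show "0 < inner_radius (polar K)" .
    fix R y assume "0 < R" "K \<subseteq> cball y R"
    have "K \<subseteq> cball 0 (2 * R)"
      using \<open>K \<subseteq> cball y R\<close> by (rule subset_cball_zero_double[OF assms(4)])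
    then have "cball 0 (1 / (2 * R)) \<subseteq> polar K"
      by (rule cball_subset_polar) (use \<open>0 < R\<close> in simp)
    then have "ereal (1 / (2 * R)) \<le> inner_radius (polar K)"
      using \<open>0 < R\<close> by (intro inner_radius_ge) auto
    then show "ereal (1 / 2 / R) \<le> inner_radius (polar K)" by simp
  qed auto
  moreover have "ereal (1 / (2 * real DIM('a))) \<le> ereal (1 / 2)"
    using DIM_positive[where 'a='a] by (simp add: field_simps)
  ultimately show ?thesis by (meson order_trans)
qed

end
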